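(* Let $0<E<F$ and $h(z)=1-(1-z)^3$. For $x>F/2$ define $$\rho(x)=\frac{\min\{h(z):z\in[E/x,F/x]\}}{\max\{h(z):z\in[E/x,F/x]\}} .$$ Then $\rho$ attains its maximum over $x\in(F/2,\infty)$ at $$x=\frac13(E+F)+\frac13\sqrt{\tfrac12(E^2+F^2)+\tfrac12(F-E)^2}.$$
   Context: Interpretation: in the dual-window iteration $\gamma_{k+1}=3\gamma_k-3S_kg+SS_k\gamma_k$ (with $S$, $S_k$ the frame operators of $(g,a,b)$, $(\gamma_k,a,b)$), the operators $Z_k=(SS_k)^{1/2}$ satisfy $Z_{k+1}=h(Z_k)$; if $Z_0=S$ has spectrum $[E,F]$ and is rescaled to $S/x$, $\rho(x)$ is the ratio of the minimum to the maximum of the spectrum after one step. *)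

theory Defs
  imports Complex_Main
begin

definition h :: "real \<Rightarrow> real" where
  "h z = 1 - (1 - z) ^ 3"

text \<open>rho E F x = min of h over [E/x, F/x] divided by max of h over [E/x, F/x];
  min/max are taken as Inf/Sup of the image of the compact interval (attained, h continuous).\<close>
definition rho :: "real \<Rightarrow> real \<Rightarrow> real \<Rightarrow> real" where
  "rho E F x = Inf (h ` {E/x .. F/x}) / Sup (h ` {E/x .. F/x})"

end

theory Submission
  imports Defs
begin

text \<open>Since \<open>h\<close> is increasing, \<open>\<rho>(x) = h(E/x) / h(F/x)\<close>, and as
  \<open>x\<^sup>3 h(c/x) = c q\<^sub>c(x)\<close> with \<open>q\<^sub>c(x) = 3x\<^sup>2 - 3cx + c\<^sup>2 > 0\<close> (\<open>h_quad c x\<close> below), \<open>\<rho>(x)\<close> is the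
  ratio \<open>E q\<^sub>E(x) / (F q\<^sub>F(x))\<close>. With \<open>s = \<surd>(E\<^sup>2 - EF + F\<^sup>2)\<close> and \<open>x\<^sub>0 = (E + F + s)/3\<close>, the
  cross difference \<open>q\<^sub>E(x) q\<^sub>F(x\<^sub>0) - q\<^sub>E(x\<^sub>0) q\<^sub>F(x)\<close> factors as \<open>-3(F - E) s (x - x\<^sub>0)\<^sup>2 \<le> 0\<close>,
  so \<open>x\<^sub>0\<close> maximises \<open>\<rho>\<close> even over all \<open>x > 0\<close>.\<close>

definition h_quad :: "real \<Rightarrow> real \<Rightarrow> real" where
  "h_quad c x = 3 * x^2 - 3 * c * x + c^2"

lemma mono_h: "mono h"
proof
  fix a b :: real
  assume "a \<le> b"
  then have "(1 - b)^3 \<le> (1 - a)^3"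
    by (intro power_mono_odd) auto
  then show "h a \<le> h b"
    unfolding h_def by simp
qed

lemma rho_eq_h_ratio:
  assumes "0 < x" "E \<le> F"
  shows "rho E F x = h (E/x) / h (F/x)"
proof -
  have "E/x \<le> F/x"
    using assms by (simp add: divide_right_mono)
  then have "Inf (h ` {E/x .. F/x}) = h (E/x)" "Sup (h ` {E/x .. F/x}) = h (F/x)"
    by (auto intro!: cInf_eq_minimum cSup_eq_maximum monoD[OF mono_h])
  then show ?thesis
    unfolding rho_def by simp
qed

lemma h_divide: "x \<noteq> 0 \<Longrightarrow> h (c/x) = c * h_quad c x / x^3"
  unfolding h_def h_quad_def by (simp add: field_simps power3_eq_cube power2_eq_square)

lemma h_quad_pos:
  assumes "c \<noteq> 0"
  shows "0 < h_quad c x"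
proof -
  have "h_quad c x = 3 * (x - c/2)^2 + c^2/4"
    unfolding h_quad_def by (simp add: power2_eq_square algebra_simps)
  moreover have "0 < c^2/4"
    using assms by simp
  ultimately show ?thesis
    by (smt (verit) zero_le_power2)
qed

lemma rho_eq_quad_ratio:
  assumes "0 < x" "E \<le> F"
  shows "rho E F x = E * h_quad E x / (F * h_quad F x)"
proof -
  have "rho E F x = (E * h_quad E x / x^3) / (F * h_quad F x / x^3)"
    using assms by (simp add: rho_eq_h_ratio h_divide)
  also have "\<dots> = E * h_quad E x / (F * h_quad F x)"
    using \<open>0 < x\<close> by (simp add: divide_divide_times_eq)
  finally show ?thesis .
qed

lemma h_quad_cross_diff:
  assumes "s^2 = E^2 - E * F + F^2" "3 * x0 = E + F + s"
  shows "h_quad E x * h_quad F x0 - h_quad E x0 * h_quad F x = - 3 * (F - E) * s * (x - x0)^2"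
  using assms unfolding h_quad_def by algebra

lemma rho_le_rho_crit:
  assumes "0 < E" "E \<le> F" "0 \<le> s" "s^2 = E^2 - E * F + F^2" "0 < x"
  shows "rho E F x \<le> rho E F ((E + F + s)/3)"
proof -
  define x0 where "x0 = (E + F + s)/3"
  have "0 < x0"
    using assms unfolding x0_def by simp
  have "3 * x0 = E + F + s"
    unfolding x0_def by simp
  moreover have "0 \<le> 3 * (F - E) * s * (x - x0)^2"
    using assms by simp
  ultimately have "h_quad E x * h_quad F x0 \<le> h_quad E x0 * h_quad F x"
    using h_quad_cross_diff[OF assms(4), of x0 x] by linarith
  then have "E * h_quad E x * (F * h_quad F x0) \<le> E * h_quad E x0 * (F * h_quad F x)"
    using mult_left_mono[of _ _ "E * F"] assms by (simp add: ac_simps)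
  moreover have "0 < F * h_quad F x" "0 < F * h_quad F x0"
    using assms by (simp_all add: h_quad_pos)
  moreover have "a / b \<le> c / d" if "a * d \<le> c * b" "0 < b" "0 < d" for a b c d :: real
    using that by (simp add: divide_simps)
  ultimately have "E * h_quad E x / (F * h_quad F x) \<le> E * h_quad E x0 / (F * h_quad F x0)"
    by blast
  then show ?thesis
    using assms \<open>0 < x0\<close> by (simp add: rho_eq_quad_ratio x0_def)
qed

lemma sq_half_minus_lt_discr:
  fixes E F :: real
  assumes "F \<noteq> 0"
  shows "(F/2 - E)^2 < E^2 - E * F + F^2"
proof -
  have "E^2 - E * F + F^2 = (F/2 - E)^2 + 3/4 * F^2"
    by (simp add: power2_eq_square algebra_simps)
  moreover have "0 < F^2"
    using assms by simp
  ultimately show ?thesis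
    by linarith
qed

lemma half_lt_crit:
  fixes E F s :: real
  assumes "F \<noteq> 0" "0 \<le> s" "s^2 = E^2 - E * F + F^2"
  shows "F/2 < (E + F + s)/3"
proof -
  have "(F/2 - E)^2 < s^2"
    using sq_half_minus_lt_discr[OF assms(1)] assms(3) by simp
  then have "F/2 - E < s"
    using assms(2) by (rule power_less_imp_less_base)
  then show ?thesis
    by (simp add: field_simps)
qed

theorem mainTheorem13:
  fixes E F :: real
  assumes "0 < E" and "E < F"
  defines "x0 \<equiv> (E + F) / 3 + sqrt ((E^2 + F^2) / 2 + (F - E)^2 / 2) / 3"
  shows "F / 2 < x0 \<and> (\<forall>x. F / 2 < x \<longrightarrow> rho E F x \<le> rho E F x0)"
proof -
  define s where "s = sqrt (E^2 - E * F + F^2)"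
  have "(E^2 + F^2) / 2 + (F - E)^2 / 2 = E^2 - E * F + F^2"
    by (simp add: power2_eq_square field_simps)
  then have x0_eq: "x0 = (E + F + s)/3"
    unfolding x0_def s_def by simp
  have "0 \<le> E^2 - E * F + F^2"
    using sq_half_minus_lt_discr[of F E] zero_le_power2[of "F/2 - E"] assms by linarith
  then have s_sq: "s^2 = E^2 - E * F + F^2" and s_nonneg: "0 \<le> s"
    unfolding s_def by simp_all
  have "F / 2 < x0"
    unfolding x0_eq using assms by (intro half_lt_crit s_nonneg s_sq) simp
  moreover have "rho E F x \<le> rho E F x0" if "F / 2 < x" for x
    unfolding x0_eq using assms that \<open>F / 2 < x0\<close> by (intro rho_le_rho_crit s_nonneg s_sq) simp_all
  ultimately show ?thesis
    by blast
qed

end
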